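(* Let $\Gamma_1$ and $\Gamma_2$ be isomorphic finite connected graphs with vertices $p_1,\dots,p_n$ and $q_1,\dots,q_n$ respectively, $p_i$ corresponding to $q_i$. Let $\Gamma_0$ be the graph obtained from the disjoint union of $\Gamma_1$ and $\Gamma_2$ by additionally joining $p_i$ with $q_j$ by an edge whenever $p_j\sim p_i$. If $\lambda_1,\dots,\lambda_n$ are the eigenvalues (with multiplicity) of the normalized Laplacian of $\Gamma_1$ (equivalently of $\Gamma_2$), then the eigenvalues of the normalized Laplacian of $\Gamma_0$ are $\lambda_1,\dots,\lambda_n$ together with the eigenvalue $1$ with multiplicity $n$.
   Context: For a finite simple graph without isolated vertices, write $i\sim j$ for adjacency and $n_i$ for the degree of $i$. The normalized Laplacian acts on real functions $v$ on the vertices by $\Delta v(i)=v(i)-\frac{1}{n_i}\sum_{j\sim i}v(j)$; $\lambda$ is an eigenvalue with eigenfunction $u$ if $u\not\equiv 0$ and $\frac{1}{n_i}\sum_{j\sim i}u(j)=(1-\lambda)u(i)$ for all $i$. A graph with $N$ vertices has $N$ eigenvalues counted with multiplicity. *)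

theory Defs
  imports "HOL-Analysis.Analysis"
begin

definition simple_graph :: "('v \<Rightarrow> 'v \<Rightarrow> bool) \<Rightarrow> bool" where
  "simple_graph E \<longleftrightarrow> (\<forall>i j. E i j \<longleftrightarrow> E j i) \<and> (\<forall>i. \<not> E i i)"

definition no_isolated :: "('v \<Rightarrow> 'v \<Rightarrow> bool) \<Rightarrow> bool" where
  "no_isolated E \<longleftrightarrow> (\<forall>i. \<exists>j. E i j)"

definition connected_graph :: "('v \<Rightarrow> 'v \<Rightarrow> bool) \<Rightarrow> bool" where
  "connected_graph E \<longleftrightarrow> (\<forall>i j. E\<^sup>*\<^sup>* i j)"

definition degree :: "('v::finite \<Rightarrow> 'v \<Rightarrow> bool) \<Rightarrow> 'v \<Rightarrow> nat" where
  "degree E i = card {j. E i j}"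

text \<open>Eigenfunctions of the normalized Laplacian for eigenvalue lam (together with 0):
  (1/n_i) * sum_{j ~ i} u(j) = (1 - lam) u(i) for all i.\<close>
definition nl_eigenspace :: "('v::finite \<Rightarrow> 'v \<Rightarrow> bool) \<Rightarrow> real \<Rightarrow> (real^'v) set" where
  "nl_eigenspace E lam =
     {u. \<forall>i. (1 / real (degree E i)) * (\<Sum>j\<in>{j. E i j}. u $ j) = (1 - lam) * u $ i}"

text \<open>Multiplicity of lam as an eigenvalue of the normalized Laplacian
  (dimension of the eigenspace; 0 if lam is not an eigenvalue).\<close>
definition nl_mult :: "('v::finite \<Rightarrow> 'v \<Rightarrow> bool) \<Rightarrow> real \<Rightarrow> nat" where
  "nl_mult E lam = dim (nl_eigenspace E lam)"

text \<open>The graph Gamma_0 on the vertex set 'v + 'v: Inl i is p_i, Inr i is q_i.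
  Two copies of E, plus p_i -- q_j whenever p_j ~ p_i.\<close>
fun double_graph :: "('v \<Rightarrow> 'v \<Rightarrow> bool) \<Rightarrow> 'v + 'v \<Rightarrow> 'v + 'v \<Rightarrow> bool" where
  "double_graph E (Inl i) (Inl j) = E i j"
| "double_graph E (Inr i) (Inr j) = E i j"
| "double_graph E (Inl i) (Inr j) = E j i"
| "double_graph E (Inr j) (Inl i) = E j i"

end

theory Submission
  imports Defs
begin

text \<open>The vertices \<open>p\<^sub>i = Inl i\<close> and \<open>q\<^sub>i = Inr i\<close> of the doubled graph have the same
  neighbours, namely both copies of the neighbours of \<open>i\<close>, hence degree \<open>2 n\<^sub>i\<close>. Writing \<open>a\<close>, \<open>b\<close> for
  the restrictions of a function \<open>u\<close> to the two copies, the eigenvalue equations at \<open>p\<^sub>i\<close> and \<open>q\<^sub>i\<close>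
  say that \<open>(1 - \<lambda>) a\<^sub>i\<close> and \<open>(1 - \<lambda>) b\<^sub>i\<close> both equal half the neighbour average of \<open>a + b\<close>. Adding
  and subtracting them, \<open>u\<close> is an eigenfunction for \<open>\<lambda>\<close> iff \<open>a + b\<close> is an eigenfunction of the
  original graph for \<open>\<lambda>\<close> and \<open>(1 - \<lambda>)(a - b) = 0\<close>. Since \<open>u \<mapsto> (a + b, a - b)\<close> is a linear
  isomorphism, the eigenspace of the doubled graph has the dimension of the original eigenspace plus
  \<open>n\<close> if \<open>\<lambda> = 1\<close> and plus \<open>0\<close> otherwise.\<close>

definition twin_sum :: "real^('v::finite + 'v) \<Rightarrow> real^'v" where
  "twin_sum u = (\<chi> i. u $ Inl i + u $ Inr i)"

definition twin_diff :: "real^('v::finite + 'v) \<Rightarrow> real^'v" where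
  "twin_diff u = (\<chi> i. u $ Inl i - u $ Inr i)"

definition twin_vector :: "real^'v \<Rightarrow> real^'v \<Rightarrow> real^('v::finite + 'v)" where
  "twin_vector s d = (\<chi> x. case x of Inl i \<Rightarrow> (s $ i + d $ i) / 2 | Inr i \<Rightarrow> (s $ i - d $ i) / 2)"

lemma twin_sum_twin_vector [simp]: "twin_sum (twin_vector s d) = s"
  by (simp add: twin_sum_def twin_vector_def vec_eq_iff field_simps)

lemma twin_diff_twin_vector [simp]: "twin_diff (twin_vector s d) = d"
  by (simp add: twin_diff_def twin_vector_def vec_eq_iff field_simps)

lemma twin_vector_twin_sum_twin_diff: "twin_vector (twin_sum u) (twin_diff u) = u"
proof -
  have "twin_vector (twin_sum u) (twin_diff u) $ x = u $ x" for x
    by (cases x) (simp_all add: twin_vector_def twin_sum_def twin_diff_def field_simps)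
  then show ?thesis
    by (simp add: vec_eq_iff)
qed

lemma linear_twin_vector: "linear (\<lambda>(s, d). twin_vector s d)"
  by (rule linearI) (auto simp: twin_vector_def vec_eq_iff field_simps split: sum.split)

lemma inj_twin_vector: "inj (\<lambda>(s, d). twin_vector s d)"
  by (rule injI) (metis (mono_tags) case_prod_beta prod_eq_iff twin_sum_twin_vector twin_diff_twin_vector)

lemma double_graph_Inl_eq_Inr:
  assumes "simple_graph E"
  shows "double_graph E (Inl i) = double_graph E (Inr i)"
proof
  fix y
  show "double_graph E (Inl i) y = double_graph E (Inr i) y"
    using assms by (cases y) (auto simp: simple_graph_def)
qed

lemma neighbours_double_graph_Inr:
  "{y. double_graph E (Inr i) y} = Inl ` {j. E i j} \<union> Inr ` {j. E i j}"
proof (rule set_eqI)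
  fix y
  show "y \<in> {y. double_graph E (Inr i) y} \<longleftrightarrow> y \<in> Inl ` {j. E i j} \<union> Inr ` {j. E i j}"
    by (cases y) auto
qed

lemma degree_double_graph_Inr:
  fixes E :: "'v::finite \<Rightarrow> 'v \<Rightarrow> bool"
  shows "degree (double_graph E) (Inr i) = 2 * degree E i"
  unfolding degree_def neighbours_double_graph_Inr
  by (subst card_Un_disjoint) (auto simp: card_image)

lemma neighbour_sum_double_graph_Inr:
  fixes E :: "'v::finite \<Rightarrow> 'v \<Rightarrow> bool"
  shows "(\<Sum>y\<in>{y. double_graph E (Inr i) y}. u $ y) = (\<Sum>j\<in>{j. E i j}. twin_sum u $ j)"
  unfolding neighbours_double_graph_Inr
  by (subst sum.union_disjoint) (auto simp: sum.reindex sum.distrib twin_sum_def)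

lemma subspace_nl_eigenspace: "subspace (nl_eigenspace E lam)"
proof -
  have "linear (\<lambda>u. \<chi> i. (\<Sum>j\<in>{j. E i j}. u $ j) / real (degree E i) - (1 - lam) * u $ i)"
    by (rule linearI)
      (simp_all add: vec_eq_iff sum.distrib sum_distrib_left[symmetric] add_divide_distrib algebra_simps)
  from linear_subspace_kernel[OF this] show ?thesis
    by (simp add: nl_eigenspace_def vec_eq_iff)
qed

lemma dim_scalar_mult_kernel: "dim {d :: real^'n. c *s d = 0} = (if c = 0 then CARD('n) else 0)"
  by (auto simp: vec_eq_iff)

lemma mem_nl_eigenspace_double_graph_iff:
  fixes E :: "'v::finite \<Rightarrow> 'v \<Rightarrow> bool"
  assumes "simple_graph E"
  shows "u \<in> nl_eigenspace (double_graph E) lam \<longleftrightarrow>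
           twin_sum u \<in> nl_eigenspace E lam \<and> (1 - lam) *s twin_diff u = 0"
proof -
  let ?eq = "\<lambda>x. (1 / real (degree (double_graph E) x)) * (\<Sum>y\<in>{y. double_graph E x y}. u $ y)
                  = (1 - lam) * u $ x"
  have twin_equations: "?eq (Inl i) \<and> ?eq (Inr i) \<longleftrightarrow>
      (1 / real (degree E i)) * (\<Sum>j\<in>{j. E i j}. twin_sum u $ j) = (1 - lam) * twin_sum u $ i
      \<and> (1 - lam) * twin_diff u $ i = 0" for i
  proof -
    have "degree (double_graph E) (Inl i) = degree (double_graph E) (Inr i)"
      by (simp add: degree_def double_graph_Inl_eq_Inr[OF assms])
    then show ?thesis
      unfolding double_graph_Inl_eq_Inr[OF assms] degree_double_graph_Inr neighbour_sum_double_graph_Inr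
      by (auto simp: twin_sum_def twin_diff_def field_simps)
  qed
  show ?thesis
    unfolding nl_eigenspace_def mem_Collect_eq split_sum_all all_conj_distrib[symmetric] twin_equations
    by (auto simp: vec_eq_iff)
qed

lemma nl_eigenspace_double_graph:
  fixes E :: "'v::finite \<Rightarrow> 'v \<Rightarrow> bool"
  assumes "simple_graph E"
  shows "nl_eigenspace (double_graph E) lam =
           (\<lambda>(s, d). twin_vector s d) ` (nl_eigenspace E lam \<times> {d. (1 - lam) *s d = 0})"
proof (rule set_eqI)
  fix u
  show "u \<in> nl_eigenspace (double_graph E) lam \<longleftrightarrow>
          u \<in> (\<lambda>(s, d). twin_vector s d) ` (nl_eigenspace E lam \<times> {d. (1 - lam) *s d = 0})"
    unfolding mem_nl_eigenspace_double_graph_iff[OF assms]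
    by (auto intro!: image_eqI[where x = "(twin_sum u, twin_diff u)"]
        simp: twin_vector_twin_sum_twin_diff)
qed

theorem theorem4:
  fixes E :: "'v::finite \<Rightarrow> 'v \<Rightarrow> bool"
  assumes "simple_graph E" and "connected_graph E" and "no_isolated E"
  shows "\<forall>lam. nl_mult (double_graph E) lam
                = nl_mult E lam + (if lam = 1 then CARD('v) else 0)"
proof
  fix lam
  let ?K = "{d :: real^'v. (1 - lam) *s d = 0}"
  have "nl_mult (double_graph E) lam = dim (nl_eigenspace E lam \<times> ?K)"
    unfolding nl_mult_def nl_eigenspace_double_graph[OF assms(1)]
    by (rule dim_image_eq[OF linear_twin_vector inj_on_subset[OF inj_twin_vector subset_UNIV]])
  also have "\<dots> = nl_mult E lam + dim ?K"
    unfolding nl_mult_def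
    by (rule dim_Times[OF subspace_nl_eigenspace]) (auto simp: subspace_def vec_eq_iff)
  also have "dim ?K = (if lam = 1 then CARD('v) else 0)"
    unfolding dim_scalar_mult_kernel by simp
  finally show "nl_mult (double_graph E) lam = nl_mult E lam + (if lam = 1 then CARD('v) else 0)" .
qed

end
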